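(* Let $d_n$ be the number of Dyck paths of semilength $n\ge1$ with the following property: every descent that does not end on the $x$-axis (that is, at height $0$) has odd length, while descents ending on the $x$-axis may have any length. Let $g_0(z)=\sum_{n\ge1}d_nz^{2n}$. Then $$g_0=\frac{z^2v_1}{v_1(1-z^2)-z},$$ and, with $Z=z^2$, $g_0=Z+2Z^2+5Z^3+13Z^4+35Z^5+97Z^6+274Z^7+785Z^8+\cdots$.
   Context: A Dyck path is a finite sequence of up-steps $(1,1)$ and down-steps $(1,-1)$ starting at height $0$, never going below height $0$, and ending at height $0$; its semilength is half its number of steps. Only nonempty paths are considered. A descent is a maximal run of consecutive down-steps; its length is the number of down-steps in it. Let $v_1=v_1(z)$ denote the unique root $u$ of the cubic $$z u^3+(z^2-1)u^2-z^3u+z^2=0$$ which is a Laurent series in $z$ with $z\,v_1(z)\to1$ as $z\to0$. Its expansion begins $v_1=\frac1z-z-z^5-2z^7-\cdots$. *)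

theory Defs
  imports Main "HOL-Computational_Algebra.Formal_Laurent_Series"
begin

text \<open>A lattice path is a list of steps: True = up-step (1,1), False = down-step (1,-1).\<close>

definition height :: "bool list \<Rightarrow> int" where
  "height xs = int (length (filter id xs)) - int (length (filter Not xs))"

definition dyck :: "bool list \<Rightarrow> bool" where
  "dyck xs \<longleftrightarrow> xs \<noteq> [] \<and> (\<forall>k \<le> length xs. height (take k xs) \<ge> 0) \<and> height xs = 0"

text \<open>Steps with indices i..j (0-based, inclusive) form a descent: a maximal run of down-steps.\<close>
definition is_descent :: "bool list \<Rightarrow> nat \<Rightarrow> nat \<Rightarrow> bool" where
  "is_descent xs i j \<longleftrightarrow> i \<le> j \<and> j < length xs \<and> (\<forall>k. i \<le> k \<and> k \<le> j \<longrightarrow> \<not> xs ! k)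
     \<and> (i = 0 \<or> xs ! (i - 1)) \<and> (j + 1 = length xs \<or> xs ! (j + 1))"

definition odd_descents_off_axis :: "bool list \<Rightarrow> bool" where
  "odd_descents_off_axis xs \<longleftrightarrow>
     (\<forall>i j. is_descent xs i j \<and> height (take (j + 1) xs) \<noteq> 0 \<longrightarrow> odd (j - i + 1))"

definition dcount :: "nat \<Rightarrow> nat" where
  "dcount n = card {xs. length xs = 2 * n \<and> dyck xs \<and> odd_descents_off_axis xs}"

definition g0 :: "real fls" where
  "g0 = fps_to_fls (Abs_fps (\<lambda>m. if even m \<and> m \<ge> 2 then real (dcount (m div 2)) else 0))"

text \<open>v is a root of z u^3 + (z^2-1) u^2 - z^3 u + z^2 = 0 which is a Laurent series
  with z v(z) -> 1 as z -> 0, i.e. v = 1/z + (power series without constant-term restriction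
  beyond this).\<close>
definition is_v1 :: "real fls \<Rightarrow> bool" where
  "is_v1 v \<longleftrightarrow> fls_X * v ^ 3 + (fls_X ^ 2 - 1) * v ^ 2 - fls_X ^ 3 * v + fls_X ^ 2 = 0
     \<and> (\<forall>n < -1. fls_nth v n = 0) \<and> fls_nth v (-1) = 1"

end

theory Submission
  imports Defs
begin

(* Cut a nonempty Dyck path at its first return to the axis: U a D b. The descent ending with
   this D ends on the axis and is unrestricted, the descents of b are those of b, and every other
   descent of a ends strictly above the axis. So a must have all its descents odd except the last
   one, which merges with D. Sorting such words a by the parity of their last descent gives series
   E, O in Z = z^2 with E = 1 + Z (O + E (E - 1)) and O = Z E (1 + O), and the series G of all good
   paths (the empty one included) satisfies G = 1 + Z (E + O) G. Eliminating O, W = 1 - Z E is a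
   root of W^3 + (Z - 1) W^2 - Z^2 W + Z^2 = 0. Multiplying the cubic for v1 by z^2 turns it into
   this cubic for z v1(z) at Z = z^2, which has only one power-series root with constant term 1;
   hence z v1(z) = W(z^2). Solving for G in terms of W gives g0 = G(z^2) - 1. *)

section \<open>Dyck words and first returns\<close>

lemma height_simps [simp]:
  "height [] = 0" "height (True # xs) = height xs + 1" "height (False # xs) = height xs - 1"
  "height (xs @ ys) = height xs + height ys"
  by (auto simp: height_def)

lemma height_Cons: "height (x # xs) = (if x then 1 else -1) + height xs"
  by (cases x) auto

definition nonneg_from :: "int \<Rightarrow> bool list \<Rightarrow> bool" where
  "nonneg_from h xs \<longleftrightarrow> (\<forall>k \<le> length xs. 0 \<le> h + height (take k xs))"

lemma nonneg_from_Nil [simp]: "nonneg_from h [] \<longleftrightarrow> 0 \<le> h"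
  by (simp add: nonneg_from_def)

lemma nonneg_from_Cons:
  "nonneg_from h (x # xs) \<longleftrightarrow> 0 \<le> h \<and> nonneg_from (h + (if x then 1 else -1)) xs"
proof -
  have "(\<forall>k \<le> Suc n. P k) \<longleftrightarrow> P 0 \<and> (\<forall>k \<le> n. P (Suc k))" for n and P :: "nat \<Rightarrow> bool"
    by (metis Suc_le_mono le0 not0_implies_Suc)
  then show ?thesis
    unfolding nonneg_from_def by (simp only: length_Cons) (auto simp: height_Cons algebra_simps)
qed

lemma nonneg_from_Cons_simps [simp]:
  "nonneg_from h (True # xs) \<longleftrightarrow> 0 \<le> h \<and> nonneg_from (h + 1) xs"
  "nonneg_from h (False # xs) \<longleftrightarrow> 0 \<le> h \<and> nonneg_from (h - 1) xs"
  by (auto simp: nonneg_from_Cons)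

lemma nonneg_from_start: "nonneg_from h xs \<Longrightarrow> 0 \<le> h"
  by (cases xs) (auto simp: nonneg_from_Cons)

lemma nonneg_from_mono: "nonneg_from h xs \<Longrightarrow> h \<le> h' \<Longrightarrow> nonneg_from h' xs"
  unfolding nonneg_from_def by force

lemma nonneg_from_append:
  "nonneg_from h (xs @ ys) \<longleftrightarrow> nonneg_from h xs \<and> nonneg_from (h + height xs) ys"
proof (induction xs arbitrary: h)
  case Nil
  then show ?case using nonneg_from_start by auto
next
  case (Cons x xs)
  then show ?case by (cases x) (auto simp: algebra_simps)
qed

definition dyck_word :: "bool list \<Rightarrow> bool" where
  "dyck_word xs \<longleftrightarrow> nonneg_from 0 xs \<and> height xs = 0"

lemma dyck_iff_dyck_word: "dyck xs \<longleftrightarrow> xs \<noteq> [] \<and> dyck_word xs"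
  by (simp add: dyck_def dyck_word_def nonneg_from_def)

lemma dyck_word_Nil [simp]: "dyck_word []"
  by (simp add: dyck_word_def)

lemma dyck_word_hd: "dyck_word (x # xs) \<Longrightarrow> x"
  by (cases x) (auto simp: dyck_word_def dest: nonneg_from_start)

lemma length_dyck_word: "dyck_word xs \<Longrightarrow> length xs = 2 * length (filter id xs)"
  using sum_length_filter_compl[of id xs] by (simp add: dyck_word_def height_def comp_def)

lemma dyck_word_lift: "dyck_word a \<Longrightarrow> dyck_word b \<Longrightarrow> dyck_word (True # a @ False # b)"
  by (auto simp: dyck_word_def nonneg_from_append intro: nonneg_from_mono)

lemma split_at_first_step_below_axis:
  assumes "height xs < 0"
  shows "\<exists>a b. xs = a @ False # b \<and> dyck_word a"
proof -
  define k where "k = (LEAST k. height (take k xs) < 0)"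
  have ex: "height (take (length xs) xs) < 0" using assms by simp
  have neg: "height (take k xs) < 0"
    unfolding k_def by (rule LeastI[of "\<lambda>k. height (take k xs) < 0", OF ex])
  have "k \<le> length xs"
    unfolding k_def by (rule Least_le[of "\<lambda>k. height (take k xs) < 0", OF ex])
  have nonneg: "0 \<le> height (take j xs)" if "j < k" for j
    using that not_less_Least unfolding k_def by (metis not_le)
  obtain j where kj: "k = Suc j"
    using neg by (cases k) auto
  with \<open>k \<le> length xs\<close> have j: "j < length xs" by simp
  then have "height (take k xs) = height (take j xs) + (if xs ! j then 1 else -1)"
    by (cases "xs ! j") (auto simp: kj take_Suc_conv_app_nth)
  with neg nonneg[of j] kj have down: "\<not> xs ! j" and "height (take j xs) = 0"
    by (auto split: if_splits)
  moreover have "nonneg_from 0 (take j xs)"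
    using nonneg kj by (auto simp: nonneg_from_def min_def)
  moreover have "xs = take j xs @ False # drop (Suc j) xs"
    using id_take_nth_drop[OF j] down by (metis (full_types))
  ultimately show ?thesis unfolding dyck_word_def by blast
qed

lemma dyck_word_first_return:
  assumes "dyck_word xs" "xs \<noteq> []"
  obtains a b where "xs = True # a @ False # b" "dyck_word a" "dyck_word b"
proof -
  obtain r where r: "xs = True # r"
    using assms dyck_word_hd by (cases xs) auto
  then have "height r < 0" using assms by (simp add: dyck_word_def)
  with split_at_first_step_below_axis obtain a b where "r = a @ False # b" "dyck_word a" by blast
  with assms r show ?thesis
    using that[of a b] by (auto simp: dyck_word_def nonneg_from_append)
qed

lemma dyck_word_append_down_inj:
  assumes "dyck_word a" "dyck_word a'" "a @ False # b = a' @ False # b'"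
  shows "a = a' \<and> b = b'"
proof -
  have "\<not> length a < length a'"
    if "dyck_word a" "dyck_word a'" "a @ False # b = a' @ False # b'" for a a' b b'
  proof
    assume less: "length a < length a'"
    then have "take (Suc (length a)) a' = a @ [False]"
      using arg_cong[OF that(3), of "take (Suc (length a))"] by simp
    moreover have "0 \<le> height (take (Suc (length a)) a')"
      using that(2) less by (simp add: dyck_word_def nonneg_from_def)
    ultimately show False using that(1) by (simp add: dyck_word_def)
  qed
  then have "length a = length a'"
    using assms by (metis linorder_neqE_nat)
  then show ?thesis using assms(3) by simp
qed

section \<open>Descents as runs of down-steps\<close>

(* The paths are read left to right; r is the length of the current run of down-steps and h the
   current height. A run is checked when an up-step closes it; the final run is left unchecked. *)
fun down_run :: "nat \<Rightarrow> bool list \<Rightarrow> nat" where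
  "down_run r [] = r"
| "down_run r (x # xs) = (if x then down_run 0 xs else down_run (Suc r) xs)"

fun closed_runs_odd :: "nat \<Rightarrow> bool list \<Rightarrow> bool" where
  "closed_runs_odd r [] = True"
| "closed_runs_odd r (x # xs) =
     (if x then (r = 0 \<or> odd r) \<and> closed_runs_odd 0 xs else closed_runs_odd (Suc r) xs)"

definition run_ok :: "int \<Rightarrow> nat \<Rightarrow> bool" where
  "run_ok h r \<longleftrightarrow> r = 0 \<or> h = 0 \<or> odd r"

lemma run_ok_simps [simp]: "run_ok 0 r" "run_ok h 0"
  by (simp_all add: run_ok_def)

fun closed_runs_ok :: "int \<Rightarrow> nat \<Rightarrow> bool list \<Rightarrow> bool" where
  "closed_runs_ok h r [] = True"
| "closed_runs_ok h r (x # xs) =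
     (if x then run_ok h r \<and> closed_runs_ok (h + 1) 0 xs else closed_runs_ok (h - 1) (Suc r) xs)"

lemma down_run_append: "down_run r (xs @ ys) = down_run (down_run r xs) ys"
  by (induction xs arbitrary: r) auto

lemma down_run_snoc: "down_run r (xs @ [x]) = (if x then 0 else Suc (down_run r xs))"
  by (simp add: down_run_append)

lemma closed_runs_odd_append:
  "closed_runs_odd r (xs @ ys) \<longleftrightarrow> closed_runs_odd r xs \<and> closed_runs_odd (down_run r xs) ys"
  by (induction xs arbitrary: r) auto

lemma closed_runs_ok_append:
  "closed_runs_ok h r (xs @ ys) \<longleftrightarrow>
     closed_runs_ok h r xs \<and> closed_runs_ok (h + height xs) (down_run r xs) ys"
  by (induction xs arbitrary: h r) (auto simp: height_Cons algebra_simps)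

lemma closed_runs_ok_above_axis:
  "nonneg_from (h - 1) xs \<Longrightarrow> closed_runs_ok h r xs \<longleftrightarrow> closed_runs_odd r xs"
proof (induction xs arbitrary: h r)
  case (Cons x xs)
  then show ?case
    using Cons.IH[of "h + 1"] Cons.IH[of "h - 1"] by (cases x) (auto simp: run_ok_def)
qed simp

lemma down_run_split: "\<exists>p. xs = p @ replicate (down_run 0 xs) False \<and> (p = [] \<or> last p)"
proof (induction xs rule: rev_induct)
  case (snoc x xs)
  then obtain p where p: "xs = p @ replicate (down_run 0 xs) False" "p = [] \<or> last p"
    by blast
  show ?case
  proof (cases x)
    case False
    then have "xs @ [x] = p @ replicate (down_run 0 (xs @ [x])) False"
      using p(1) by (simp add: down_run_snoc replicate_append_same[symmetric])
    with p(2) show ?thesis by blast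
  qed (auto simp: down_run_snoc)
qed simp

lemma down_run_le_length: "down_run 0 xs \<le> length xs"
  using down_run_split[of xs] by (metis le_add2 length_append length_replicate)

lemma is_descent_less_length: "is_descent xs i j \<Longrightarrow> j < length xs"
  by (simp add: is_descent_def)

lemma is_descent_last:
  assumes "xs \<noteq> []"
  shows "is_descent xs i (length xs - 1) \<longleftrightarrow> 0 < down_run 0 xs \<and> i + down_run 0 xs = length xs"
proof -
  define t where "t = down_run 0 xs"
  obtain p where xs: "xs = p @ replicate t False" and p: "p = [] \<or> last p"
    using down_run_split unfolding t_def by blast
  have tail: "\<not> xs ! k" if "length p \<le> k" "k < length xs" for k
    using that xs by (simp add: nth_append)
  have last_p: "xs ! (length p - 1)" if "p \<noteq> []"
    using that p xs by (simp add: nth_append last_conv_nth)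
  show ?thesis
  proof
    assume d: "is_descent xs i (length xs - 1)"
    then have run: "\<not> xs ! k" if "i \<le> k" "k \<le> length xs - 1" for k
      using that by (simp add: is_descent_def)
    have "\<not> i < length p"
    proof
      assume "i < length p"
      then have "p \<noteq> []" by auto
      then have "xs ! (length p - 1)" "i \<le> length p - 1" "length p - 1 \<le> length xs - 1"
        using last_p \<open>i < length p\<close> xs by auto
      then show False using run by blast
    qed
    moreover have "\<not> length p < i"
    proof
      assume "length p < i"
      moreover have "i \<le> length xs - 1" using d by (simp add: is_descent_def)
      ultimately have "\<not> xs ! (i - 1)" "i \<noteq> 0"
        using tail[of "i - 1"] assms by auto
      then show False using d by (simp add: is_descent_def)
    qed
    ultimately have "0 < t \<and> i + t = length xs"
      using d assms xs unfolding is_descent_def by auto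
    then show "0 < down_run 0 xs \<and> i + down_run 0 xs = length xs"
      by (simp add: t_def)
  next
    assume "0 < down_run 0 xs \<and> i + down_run 0 xs = length xs"
    then have "0 < t \<and> i + t = length xs" by (simp add: t_def)
    then have i: "i = length p" and "0 < t" using xs by auto
    then show "is_descent xs i (length xs - 1)"
      using tail last_p p xs unfolding is_descent_def by auto
  qed
qed

lemma is_descent_snoc_True: "j < length xs \<Longrightarrow> is_descent (xs @ [True]) i j \<longleftrightarrow> is_descent xs i j"
  unfolding is_descent_def by (auto simp: nth_append)

lemma is_descent_snoc_False:
  "j < length xs \<Longrightarrow> is_descent (xs @ [False]) i j \<longleftrightarrow> is_descent xs i j \<and> j + 1 < length xs"
  unfolding is_descent_def by (auto simp: nth_append)

definition closed_descents_ok :: "bool list \<Rightarrow> bool" where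
  "closed_descents_ok xs \<longleftrightarrow>
     (\<forall>i j. is_descent xs i j \<and> j + 1 < length xs \<and> height (take (j + 1) xs) \<noteq> 0 \<longrightarrow> odd (j - i + 1))"

lemma odd_descents_off_axis_iff_closed:
  "odd_descents_off_axis xs \<longleftrightarrow> closed_descents_ok xs \<and> run_ok (height xs) (down_run 0 xs)"
proof (cases "xs = []")
  case True
  then show ?thesis
    by (simp add: closed_descents_ok_def odd_descents_off_axis_def is_descent_def)
next
  case False
  define P where "P i j \<longleftrightarrow> is_descent xs i j \<and> height (take (j + 1) xs) \<noteq> 0 \<longrightarrow> odd (j - i + 1)"
    for i j
  have last: "(\<forall>i. P i (length xs - 1)) \<longleftrightarrow> run_ok (height xs) (down_run 0 xs)"
  proof -
    have "length xs - 1 + 1 = length xs" using False by simp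
    moreover have "length xs - 1 - i + 1 = down_run 0 xs"
      if "0 < down_run 0 xs" "i + down_run 0 xs = length xs" for i
      using that by linarith
    ultimately have "P i (length xs - 1) \<longleftrightarrow>
        (0 < down_run 0 xs \<and> i + down_run 0 xs = length xs \<and> height xs \<noteq> 0 \<longrightarrow> odd (down_run 0 xs))"
      for i
      unfolding P_def is_descent_last[OF False] by auto
    then show ?thesis
      using down_run_le_length[of xs] unfolding run_ok_def
      by (metis add.commute le_add_diff_inverse not_gr0)
  qed
  have "j < length xs \<longleftrightarrow> j + 1 < length xs \<or> j = length xs - 1" for j
    using False by (cases xs) auto
  moreover have "\<not> P i j \<Longrightarrow> j < length xs" for i j
    by (auto simp: P_def dest: is_descent_less_length)
  ultimately have "(\<forall>i j. P i j) \<longleftrightarrow> (\<forall>i j. j + 1 < length xs \<longrightarrow> P i j) \<and> (\<forall>i. P i (length xs - 1))"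
    by metis
  then show ?thesis
    unfolding odd_descents_off_axis_def closed_descents_ok_def last[symmetric] P_def by blast
qed

lemma closed_descents_ok_snoc_False: "closed_descents_ok (xs @ [False]) \<longleftrightarrow> closed_descents_ok xs"
proof -
  have "is_descent (xs @ [False]) i j \<and> j + 1 < length (xs @ [False])
      \<and> height (take (j + 1) (xs @ [False])) \<noteq> 0 \<longleftrightarrow>
    is_descent xs i j \<and> j + 1 < length xs \<and> height (take (j + 1) xs) \<noteq> 0" for i j
    by (cases "j < length xs") (auto simp: is_descent_snoc_False)
  then show ?thesis unfolding closed_descents_ok_def by presburger
qed

lemma closed_descents_ok_snoc_True: "closed_descents_ok (xs @ [True]) \<longleftrightarrow> odd_descents_off_axis xs"
proof -
  have "is_descent (xs @ [True]) i j \<and> j + 1 < length (xs @ [True])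
      \<and> height (take (j + 1) (xs @ [True])) \<noteq> 0 \<longleftrightarrow>
    is_descent xs i j \<and> height (take (j + 1) xs) \<noteq> 0" for i j
    by (cases "j < length xs") (auto simp: is_descent_snoc_True dest: is_descent_less_length)
  then show ?thesis unfolding closed_descents_ok_def odd_descents_off_axis_def by presburger
qed

lemma closed_descents_ok_iff_runs: "closed_descents_ok xs \<longleftrightarrow> closed_runs_ok 0 0 xs"
proof (induction xs rule: rev_induct)
  case Nil
  then show ?case by (simp add: closed_descents_ok_def)
next
  case (snoc x xs)
  then show ?case
    by (cases x) (simp_all add: closed_runs_ok_append closed_descents_ok_snoc_False
        closed_descents_ok_snoc_True odd_descents_off_axis_iff_closed)
qed

lemma odd_descents_off_axis_iff_runs:
  "odd_descents_off_axis xs \<longleftrightarrow> closed_runs_ok 0 0 xs \<and> run_ok (height xs) (down_run 0 xs)"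
  by (simp add: odd_descents_off_axis_iff_closed closed_descents_ok_iff_runs)

lemma closed_runs_ok_dyck_word_start:
  "dyck_word b \<Longrightarrow> closed_runs_ok 0 r b \<longleftrightarrow> closed_runs_ok 0 0 b"
  by (cases b) (auto dest: dyck_word_hd)

lemma closed_runs_ok_lift:
  assumes "dyck_word a" "dyck_word b"
  shows "closed_runs_ok 0 0 (True # a @ False # b) \<longleftrightarrow> closed_runs_odd 0 a \<and> closed_runs_ok 0 0 b"
proof -
  have "nonneg_from (1 - 1) a" using assms(1) by (simp add: dyck_word_def)
  then have "closed_runs_ok 1 0 a \<longleftrightarrow> closed_runs_odd 0 a"
    by (rule closed_runs_ok_above_axis)
  moreover have "closed_runs_ok 0 0 (True # a @ False # b) \<longleftrightarrow>
      closed_runs_ok 1 0 a \<and> closed_runs_ok 0 (Suc (down_run 0 a)) b"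
    using assms(1) by (simp add: closed_runs_ok_append dyck_word_def)
  ultimately show ?thesis
    using closed_runs_ok_dyck_word_start[OF assms(2), of "Suc (down_run 0 a)"] by simp
qed

lemma odd_descents_off_axis_lift:
  assumes "dyck_word a" "dyck_word b"
  shows "odd_descents_off_axis (True # a @ False # b) \<longleftrightarrow>
    closed_runs_odd 0 a \<and> odd_descents_off_axis b"
proof -
  have "height (True # a @ False # b) = 0" "height b = 0"
    using assms by (simp_all add: dyck_word_def)
  then show ?thesis
    unfolding odd_descents_off_axis_iff_runs closed_runs_ok_lift[OF assms] by simp
qed

lemma closed_runs_odd_lift:
  "dyck_word b \<Longrightarrow> closed_runs_odd 0 (True # a @ False # b) \<longleftrightarrow>
     closed_runs_odd 0 a \<and> (b = [] \<or> even (down_run 0 a) \<and> closed_runs_odd 0 b)"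
  by (cases b) (auto simp: closed_runs_odd_append dest: dyck_word_hd)

lemma down_run_lift:
  "dyck_word b \<Longrightarrow> down_run 0 (True # a @ False # b) = (if b = [] then Suc (down_run 0 a) else down_run 0 b)"
  by (cases b) (auto simp: down_run_append dest: dyck_word_hd)

definition odd_runs_even_tail :: "bool list \<Rightarrow> bool" where
  "odd_runs_even_tail xs \<longleftrightarrow> closed_runs_odd 0 xs \<and> even (down_run 0 xs)"

definition odd_runs_odd_tail :: "bool list \<Rightarrow> bool" where
  "odd_runs_odd_tail xs \<longleftrightarrow> closed_runs_odd 0 xs \<and> odd (down_run 0 xs)"

lemma odd_runs_even_tail_lift:
  assumes "dyck_word b"
  shows "odd_runs_even_tail (True # a @ False # b) \<longleftrightarrow>
    odd_runs_odd_tail a \<and> b = [] \<or> odd_runs_even_tail a \<and> b \<noteq> [] \<and> odd_runs_even_tail b"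
  unfolding odd_runs_even_tail_def odd_runs_odd_tail_def
    closed_runs_odd_lift[OF assms] down_run_lift[OF assms] by auto

lemma odd_runs_odd_tail_lift:
  assumes "dyck_word b"
  shows "odd_runs_odd_tail (True # a @ False # b) \<longleftrightarrow>
    odd_runs_even_tail a \<and> b = [] \<or> odd_runs_even_tail a \<and> b \<noteq> [] \<and> odd_runs_odd_tail b"
  unfolding odd_runs_even_tail_def odd_runs_odd_tail_def
    closed_runs_odd_lift[OF assms] down_run_lift[OF assms] by auto

section \<open>Counting by first-return decomposition\<close>

definition dyck_words_with :: "(bool list \<Rightarrow> bool) \<Rightarrow> nat \<Rightarrow> bool list set" where
  "dyck_words_with P n = {xs. length xs = 2 * n \<and> dyck_word xs \<and> P xs}"

lemma finite_dyck_words_with: "finite (dyck_words_with P n)"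
  by (rule finite_subset[OF _ finite_lists_length_eq[of UNIV "2 * n"]])
     (auto simp: dyck_words_with_def)

definition split_pairs ::
    "(bool list \<Rightarrow> bool) \<Rightarrow> (bool list \<Rightarrow> bool) \<Rightarrow> nat \<Rightarrow> (bool list \<times> bool list) set" where
  "split_pairs Q R n = (\<Union>k\<le>n. dyck_words_with Q k \<times> dyck_words_with R (n - k))"

lemma finite_split_pairs: "finite (split_pairs Q R n)"
  by (simp add: split_pairs_def finite_dyck_words_with)

lemma card_split_pairs:
  "card (split_pairs Q R n) =
     (\<Sum>k\<le>n. card (dyck_words_with Q k) * card (dyck_words_with R (n - k)))"
  unfolding split_pairs_def
  by (subst card_UN_disjoint)
     (simp_all add: finite_dyck_words_with card_cartesian_product, auto simp: dyck_words_with_def)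

lemma dyck_words_with_Suc:
  assumes "\<And>a b. dyck_word a \<Longrightarrow> dyck_word b \<Longrightarrow>
      P (True # a @ False # b) \<longleftrightarrow> Q a \<and> R b \<or> Q' a \<and> R' b"
  shows "dyck_words_with P (Suc n) =
    (\<lambda>(a, b). True # a @ False # b) ` (split_pairs Q R n \<union> split_pairs Q' R' n)"
proof (intro equalityI subsetI)
  fix xs assume "xs \<in> dyck_words_with P (Suc n)"
  then have xs: "dyck_word xs" "xs \<noteq> []" "length xs = 2 * Suc n" "P xs"
    by (auto simp: dyck_words_with_def)
  then obtain a b where ab: "xs = True # a @ False # b" "dyck_word a" "dyck_word b"
    by (blast elim: dyck_word_first_return)
  define k where "k = length (filter id a)"
  have "length a = 2 * k" "length b = 2 * (n - k)" "k \<le> n"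
    using length_dyck_word[OF ab(2)] length_dyck_word[OF ab(3)] xs(3) ab(1)
    unfolding k_def by auto
  with ab xs(4) assms show "xs \<in> (\<lambda>(a, b). True # a @ False # b) ` (split_pairs Q R n \<union> split_pairs Q' R' n)"
    unfolding split_pairs_def dyck_words_with_def by force
next
  fix xs assume "xs \<in> (\<lambda>(a, b). True # a @ False # b) ` (split_pairs Q R n \<union> split_pairs Q' R' n)"
  then show "xs \<in> dyck_words_with P (Suc n)"
    using assms unfolding split_pairs_def dyck_words_with_def by (auto intro: dyck_word_lift)
qed

lemma card_dyck_words_with_Suc:
  assumes "\<And>a b. dyck_word a \<Longrightarrow> dyck_word b \<Longrightarrow>
      P (True # a @ False # b) \<longleftrightarrow> Q a \<and> R b \<or> Q' a \<and> R' b"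
    and "\<And>a b. Q a \<Longrightarrow> R b \<Longrightarrow> Q' a \<Longrightarrow> R' b \<Longrightarrow> False"
  shows "card (dyck_words_with P (Suc n)) = card (split_pairs Q R n) + card (split_pairs Q' R' n)"
proof -
  have sub: "split_pairs Q R n \<subseteq> {(a, b). dyck_word a}" for Q R
    by (auto simp: split_pairs_def dyck_words_with_def)
  have "inj_on (\<lambda>(a, b). True # a @ False # b) (split_pairs Q R n \<union> split_pairs Q' R' n)"
    by (rule inj_on_subset[OF _ Un_least[OF sub sub]]) (auto intro!: inj_onI dest: dyck_word_append_down_inj)
  then have "card (dyck_words_with P (Suc n)) = card (split_pairs Q R n \<union> split_pairs Q' R' n)"
    by (simp add: dyck_words_with_Suc[of P Q R Q' R' n] assms(1) card_image)
  also have "\<dots> = card (split_pairs Q R n) + card (split_pairs Q' R' n)"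
  proof (rule card_Un_disjoint[OF finite_split_pairs finite_split_pairs])
    show "split_pairs Q R n \<inter> split_pairs Q' R' n = {}"
      using assms(2) by (auto simp: split_pairs_def dyck_words_with_def)
  qed
  finally show ?thesis .
qed

definition even_tail_count :: "nat \<Rightarrow> nat" where
  "even_tail_count n = card (dyck_words_with odd_runs_even_tail n)"

definition odd_tail_count :: "nat \<Rightarrow> nat" where
  "odd_tail_count n = card (dyck_words_with odd_runs_odd_tail n)"

definition good_count :: "nat \<Rightarrow> nat" where
  "good_count n = card (dyck_words_with odd_descents_off_axis n)"

lemma dyck_words_with_0: "dyck_words_with P 0 = (if P [] then {[]} else {})"
  by (auto simp: dyck_words_with_def)

lemma card_dyck_words_with_Nil: "card (dyck_words_with (\<lambda>b. b = []) m) = (if m = 0 then 1 else 0)"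
proof -
  have "dyck_words_with (\<lambda>b. b = []) m = (if m = 0 then {[]} else {})"
    by (auto simp: dyck_words_with_def)
  then show ?thesis by simp
qed

lemma card_dyck_words_with_nonempty:
  "card (dyck_words_with (\<lambda>b. b \<noteq> [] \<and> P b) m) = (if m = 0 then 0 else card (dyck_words_with P m))"
proof -
  have "dyck_words_with (\<lambda>b. b \<noteq> [] \<and> P b) m = (if m = 0 then {} else dyck_words_with P m)"
    by (auto simp: dyck_words_with_def)
  then show ?thesis by simp
qed

lemma counts_0: "even_tail_count 0 = 1" "odd_tail_count 0 = 0" "good_count 0 = 1"
  by (simp_all add: even_tail_count_def odd_tail_count_def good_count_def dyck_words_with_0
      odd_runs_even_tail_def odd_runs_odd_tail_def odd_descents_off_axis_def is_descent_def)

lemma sum_atMost_split_last: "(\<Sum>k\<le>n::nat. f k) = (\<Sum>k<n. f k) + (f n :: 'a :: comm_monoid_add)"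
  by (cases n) (simp_all add: lessThan_Suc_atMost)

lemma even_tail_count_Suc:
  "even_tail_count (Suc n) = odd_tail_count n + (\<Sum>k<n. even_tail_count k * even_tail_count (n - k))"
proof -
  have "even_tail_count (Suc n) =
      (\<Sum>k\<le>n. odd_tail_count k * (if n - k = 0 then 1 else 0))
      + (\<Sum>k\<le>n. even_tail_count k * (if n - k = 0 then 0 else even_tail_count (n - k)))"
    unfolding even_tail_count_def odd_tail_count_def
    by (subst card_dyck_words_with_Suc[of _ odd_runs_odd_tail "\<lambda>b. b = []" odd_runs_even_tail
          "\<lambda>b. b \<noteq> [] \<and> odd_runs_even_tail b"])
       (simp_all add: odd_runs_even_tail_lift card_split_pairs card_dyck_words_with_Nil
         card_dyck_words_with_nonempty)
  also have "\<dots> = odd_tail_count n + (\<Sum>k<n. even_tail_count k * even_tail_count (n - k))"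
    by (simp add: sum_atMost_split_last)
  finally show ?thesis .
qed

lemma odd_tail_count_Suc:
  "odd_tail_count (Suc n) = even_tail_count n + (\<Sum>k\<le>n. even_tail_count k * odd_tail_count (n - k))"
proof -
  have "odd_tail_count (Suc n) =
      (\<Sum>k\<le>n. even_tail_count k * (if n - k = 0 then 1 else 0))
      + (\<Sum>k\<le>n. even_tail_count k * (if n - k = 0 then 0 else odd_tail_count (n - k)))"
    unfolding even_tail_count_def odd_tail_count_def
    by (subst card_dyck_words_with_Suc[of _ odd_runs_even_tail "\<lambda>b. b = []" odd_runs_even_tail
          "\<lambda>b. b \<noteq> [] \<and> odd_runs_odd_tail b"])
       (simp_all add: odd_runs_odd_tail_lift card_split_pairs card_dyck_words_with_Nil
         card_dyck_words_with_nonempty)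
  also have "\<dots> = even_tail_count n + (\<Sum>k\<le>n. even_tail_count k * odd_tail_count (n - k))"
    by (simp add: sum_atMost_split_last counts_0)
  finally show ?thesis .
qed

lemma good_count_Suc:
  "good_count (Suc n) = (\<Sum>k\<le>n. (even_tail_count k + odd_tail_count k) * good_count (n - k))"
  unfolding even_tail_count_def odd_tail_count_def good_count_def
  by (subst card_dyck_words_with_Suc[of _ odd_runs_even_tail odd_descents_off_axis
        odd_runs_odd_tail odd_descents_off_axis])
     (auto simp: odd_descents_off_axis_lift card_split_pairs sum.distrib algebra_simps
       odd_runs_even_tail_def odd_runs_odd_tail_def)

lemma dcount_eq_good_count: "1 \<le> n \<Longrightarrow> dcount n = good_count n"
  unfolding dcount_def good_count_def dyck_words_with_def dyck_iff_dyck_word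
  by (rule arg_cong[where f = card]) auto

(* The three recurrences evaluated bottom-up, so that code_simp can compute the first values. *)
fun count_table :: "nat \<Rightarrow> nat list \<times> nat list \<times> nat list" where
  "count_table 0 = ([1], [0], [1])"
| "count_table (Suc m) = (case count_table m of (es, os, gs) \<Rightarrow>
     (es @ [os ! m + (\<Sum>k<m. es ! k * es ! (m - k))],
      os @ [es ! m + (\<Sum>k\<le>m. es ! k * os ! (m - k))],
      gs @ [\<Sum>k\<le>m. (es ! k + os ! k) * gs ! (m - k)]))"

lemma count_table_eq:
  "count_table m = (map even_tail_count [0..<Suc m], map odd_tail_count [0..<Suc m],
     map good_count [0..<Suc m])"
proof (induction m)
  case 0
  then show ?case by (simp add: counts_0)
next
  case (Suc m)
  have nth: "(map f [0..<m] @ [f m]) ! k = f k" if "k < Suc m" for f :: "nat \<Rightarrow> nat" and k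
    using that by (auto simp: nth_append less_Suc_eq)
  show ?case
    using Suc.IH
    by (simp add: even_tail_count_Suc odd_tail_count_Suc good_count_Suc)
       (auto simp: nth intro!: sum.cong)
qed

lemma dcount_values: "map dcount [1..<9] = [1, 2, 5, 13, 35, 97, 274, 785]"
proof -
  have "map dcount [1..<9] = map good_count [1..<9]"
    by (rule map_cong) (simp_all add: dcount_eq_good_count)
  also have "\<dots> = tl (snd (snd (count_table 8)))"
    by (simp only: count_table_eq snd_conv map_tl[symmetric]) (simp add: upt_rec)
  also have "\<dots> = [1, 2, 5, 13, 35, 97, 274, 785]"
    by code_simp
  finally show ?thesis .
qed

section \<open>Generating functions\<close>

definition even_tail_fps :: "real fps" where
  "even_tail_fps = Abs_fps (\<lambda>n. real (even_tail_count n))"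

definition odd_tail_fps :: "real fps" where
  "odd_tail_fps = Abs_fps (\<lambda>n. real (odd_tail_count n))"

definition good_fps :: "real fps" where
  "good_fps = Abs_fps (\<lambda>n. real (good_count n))"

lemma fps_mult_nth_atMost: "(f * g) $ n = (\<Sum>k\<le>n. f $ k * g $ (n - k))"
  by (simp add: fps_mult_nth atLeast0AtMost)

lemma even_tail_fps_eq:
  "even_tail_fps = 1 + fps_X * (odd_tail_fps + even_tail_fps * (even_tail_fps - 1))"
proof (rule fps_ext)
  fix n
  show "even_tail_fps $ n = (1 + fps_X * (odd_tail_fps + even_tail_fps * (even_tail_fps - 1))) $ n"
  proof (cases n)
    case (Suc m)
    have "(even_tail_fps * (even_tail_fps - 1)) $ m =
        (\<Sum>k<m. real (even_tail_count k) * real (even_tail_count (m - k)))"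
      by (auto simp: fps_mult_nth_atMost sum_atMost_split_last even_tail_fps_def counts_0
          intro!: sum.cong)
    then show ?thesis
      by (simp add: Suc even_tail_fps_def odd_tail_fps_def even_tail_count_Suc)
  qed (simp add: even_tail_fps_def counts_0)
qed

lemma odd_tail_fps_eq: "odd_tail_fps = fps_X * (even_tail_fps * (1 + odd_tail_fps))"
proof (rule fps_ext)
  fix n
  show "odd_tail_fps $ n = (fps_X * (even_tail_fps * (1 + odd_tail_fps))) $ n"
  proof (cases n)
    case (Suc m)
    have "(even_tail_fps * (1 + odd_tail_fps)) $ m = real (even_tail_count m)
        + (\<Sum>k\<le>m. real (even_tail_count k) * real (odd_tail_count (m - k)))"
      by (simp add: distrib_left fps_mult_nth_atMost even_tail_fps_def odd_tail_fps_def)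
    then show ?thesis
      by (simp add: Suc odd_tail_fps_def odd_tail_count_Suc)
  qed (simp add: odd_tail_fps_def counts_0)
qed

lemma good_fps_eq: "good_fps = 1 + fps_X * ((even_tail_fps + odd_tail_fps) * good_fps)"
proof (rule fps_ext)
  fix n
  show "good_fps $ n = (1 + fps_X * ((even_tail_fps + odd_tail_fps) * good_fps)) $ n"
  proof (cases n)
    case (Suc m)
    have "((even_tail_fps + odd_tail_fps) * good_fps) $ m =
        (\<Sum>k\<le>m. (real (even_tail_count k) + real (odd_tail_count k)) * real (good_count (m - k)))"
      by (simp add: fps_mult_nth_atMost even_tail_fps_def odd_tail_fps_def good_fps_def)
    then show ?thesis
      by (simp add: Suc good_fps_def good_count_Suc)
  qed (simp add: good_fps_def counts_0)
qed

definition w_fps :: "real fps" where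
  "w_fps = 1 - fps_X * even_tail_fps"

lemma w_fps_nth_0 [simp]: "w_fps $ 0 = 1"
  by (simp add: w_fps_def)

lemma w_fps_cubic: "w_fps ^ 3 + (fps_X - 1) * w_fps ^ 2 - fps_X ^ 2 * w_fps + fps_X ^ 2 = 0"
  using even_tail_fps_eq odd_tail_fps_eq unfolding w_fps_def by algebra

lemma good_fps_mult: "good_fps * (w_fps ^ 2 - fps_X + fps_X * w_fps) = w_fps"
proof -
  have "odd_tail_fps * w_fps = 1 - w_fps"
    using odd_tail_fps_eq unfolding w_fps_def by algebra
  then show ?thesis
    using good_fps_eq unfolding w_fps_def by algebra
qed

lemma good_fps_identity: "(good_fps - 1) * (w_fps * (1 - fps_X) - fps_X) = fps_X * w_fps"
proof -
  define D where "D = w_fps ^ 2 - fps_X + fps_X * w_fps"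
  have "D * ((good_fps - 1) * (w_fps * (1 - fps_X) - fps_X) - fps_X * w_fps)
      = (good_fps * D - D) * (w_fps * (1 - fps_X) - fps_X) - fps_X * w_fps * D"
    by (simp add: algebra_simps)
  also have "\<dots> = (w_fps - D) * (w_fps * (1 - fps_X) - fps_X) - fps_X * w_fps * D"
    using good_fps_mult unfolding D_def by simp
  also have "\<dots> = - (w_fps ^ 3 + (fps_X - 1) * w_fps ^ 2 - fps_X ^ 2 * w_fps + fps_X ^ 2)"
    unfolding D_def by algebra
  also have "\<dots> = 0"
    using w_fps_cubic by simp
  finally have "D * ((good_fps - 1) * (w_fps * (1 - fps_X) - fps_X) - fps_X * w_fps) = 0" .
  moreover have "D $ 0 = 1"
    by (simp add: D_def power2_eq_square)
  then have "D \<noteq> 0" by auto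
  ultimately show ?thesis by simp
qed

definition fps_at_square :: "'a :: idom fps \<Rightarrow> 'a fps" where
  "fps_at_square f = f oo fps_X ^ 2"

lemma fps_at_square_nth: "fps_at_square f $ m = (if even m then f $ (m div 2) else 0)"
proof -
  have "((fps_X ^ 2) ^ i :: 'a fps) $ m = (if m = 2 * i then 1 else 0)" for i
  proof -
    have "((fps_X ^ 2) ^ i :: 'a fps) = fps_X ^ (2 * i)"
      by (simp add: power_mult)
    then show ?thesis by (simp only: fps_X_power_iff fps_nth_Abs_fps)
  qed
  then have "fps_at_square f $ m = (\<Sum>i=0..m. if even m \<and> i = m div 2 then f $ i else 0)"
    unfolding fps_at_square_def fps_compose_nth by (intro sum.cong) auto
  then show ?thesis
    by (simp add: sum.delta)
qed

lemma fps_at_square_simps: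
  "fps_at_square (a * b) = fps_at_square a * fps_at_square b"
  "fps_at_square (a + b) = fps_at_square a + fps_at_square b"
  "fps_at_square (a - b) = fps_at_square a - fps_at_square b"
  "fps_at_square (a ^ n) = fps_at_square a ^ n"
  "fps_at_square 1 = 1" "fps_at_square 0 = 0" "fps_at_square fps_X = fps_X ^ 2"
  unfolding fps_at_square_def
  by (simp_all add: fps_compose_mult_distrib fps_compose_add_distrib fps_compose_sub_distrib
      fps_compose_power)

section \<open>The series v1\<close>

lemma cubic_root_unique_fps:
  fixes w w' :: "'a :: idom fps"
  assumes "w $ 0 = 1" "w' $ 0 = 1"
    and "w ^ 3 + (fps_X ^ 2 - 1) * w ^ 2 - fps_X ^ 4 * w + fps_X ^ 4 = 0"
    and "w' ^ 3 + (fps_X ^ 2 - 1) * w' ^ 2 - fps_X ^ 4 * w' + fps_X ^ 4 = 0"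
  shows "w = w'"
proof -
  define Q where "Q = w ^ 2 + w * w' + w' ^ 2 + (fps_X ^ 2 - 1) * (w + w') - fps_X ^ 4"
  have "(w - w') * Q = 0"
    using assms(3,4) unfolding Q_def by algebra
  moreover have "Q $ 0 = 1"
    using assms(1,2) by (simp add: Q_def power2_eq_square)
  then have "Q \<noteq> 0" by auto
  ultimately show ?thesis by simp
qed

lemma is_v1_iff_fps:
  "is_v1 v \<longleftrightarrow> (\<exists>w. fls_X * v = fps_to_fls w \<and> w $ 0 = 1
     \<and> w ^ 3 + (fps_X ^ 2 - 1) * w ^ 2 - fps_X ^ 4 * w + fps_X ^ 4 = 0)"
proof -
  have shift: "fls_nth (fls_X * v) n = fls_nth v (n - 1)" for n
    by (simp add: fls_X_times_conv_shift)
  have cubic: "fps_to_fls (w ^ 3 + (fps_X ^ 2 - 1) * w ^ 2 - fps_X ^ 4 * w + fps_X ^ 4) =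
      fls_X ^ 2 * (fls_X * v ^ 3 + (fls_X ^ 2 - 1) * v ^ 2 - fls_X ^ 3 * v + fls_X ^ 2)"
    if "fls_X * v = fps_to_fls w" for w
  proof -
    have "fps_to_fls (w ^ 3 + (fps_X ^ 2 - 1) * w ^ 2 - fps_X ^ 4 * w + fps_X ^ 4) =
        (fls_X * v) ^ 3 + (fls_X ^ 2 - 1) * (fls_X * v) ^ 2 - fls_X ^ 4 * (fls_X * v) + fls_X ^ 4"
      unfolding that by (simp add: fls_times_fps_to_fls fps_to_fls_power)
    then show ?thesis by algebra
  qed
  have X_sq: "fls_X ^ 2 \<noteq> (0 :: real fls)"
    by simp
  show ?thesis
  proof
    assume v: "is_v1 v"
    define w where "w = fls_regpart (fls_X * v)"
    have Xv: "fls_X * v = fps_to_fls w"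
      using v unfolding w_def is_v1_def by (intro fls_eqI) (auto simp: shift)
    moreover have "w $ 0 = 1"
      using v unfolding w_def is_v1_def by (simp add: shift)
    moreover have "fps_to_fls (w ^ 3 + (fps_X ^ 2 - 1) * w ^ 2 - fps_X ^ 4 * w + fps_X ^ 4) = 0"
      unfolding cubic[OF Xv] using v by (simp add: is_v1_def)
    ultimately show "\<exists>w. fls_X * v = fps_to_fls w \<and> w $ 0 = 1
        \<and> w ^ 3 + (fps_X ^ 2 - 1) * w ^ 2 - fps_X ^ 4 * w + fps_X ^ 4 = 0"
      by (simp only: fps_to_fls_eq_0_iff) blast
  next
    assume "\<exists>w. fls_X * v = fps_to_fls w \<and> w $ 0 = 1
        \<and> w ^ 3 + (fps_X ^ 2 - 1) * w ^ 2 - fps_X ^ 4 * w + fps_X ^ 4 = 0"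
    then obtain w where Xv: "fls_X * v = fps_to_fls w" and "w $ 0 = 1"
      and "w ^ 3 + (fps_X ^ 2 - 1) * w ^ 2 - fps_X ^ 4 * w + fps_X ^ 4 = 0"
      by blast
    moreover have "fls_nth v n = fls_nth (fps_to_fls w) (n + 1)" for n
      using shift[of "n + 1"] unfolding Xv by simp
    ultimately show "is_v1 v"
      unfolding is_v1_def using cubic[OF Xv] X_sq by auto
  qed
qed

lemma fps_at_square_w_fps:
  "fps_at_square w_fps $ 0 = 1"
  "fps_at_square w_fps ^ 3 + (fps_X ^ 2 - 1) * fps_at_square w_fps ^ 2
     - fps_X ^ 4 * fps_at_square w_fps + fps_X ^ 4 = 0"
proof -
  show "fps_at_square w_fps $ 0 = 1"
    by (simp add: fps_at_square_nth)
  have "fps_at_square (w_fps ^ 3 + (fps_X - 1) * w_fps ^ 2 - fps_X ^ 2 * w_fps + fps_X ^ 2) = 0"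
    using w_fps_cubic by (simp add: fps_at_square_simps)
  then show "fps_at_square w_fps ^ 3 + (fps_X ^ 2 - 1) * fps_at_square w_fps ^ 2
     - fps_X ^ 4 * fps_at_square w_fps + fps_X ^ 4 = 0"
    by (simp add: fps_at_square_simps flip: power_mult)
qed

lemma g0_eq: "g0 = fps_to_fls (fps_at_square (good_fps - 1))"
proof -
  have "Abs_fps (\<lambda>m. if even m \<and> 2 \<le> m then real (dcount (m div 2)) else 0) =
      fps_at_square (good_fps - 1)"
    by (rule fps_ext)
       (auto simp: fps_at_square_nth good_fps_def dcount_eq_good_count counts_0 elim!: evenE)
  then show ?thesis
    unfolding g0_def by simp
qed

lemma g0_formula:
  assumes "fls_X * v = fps_to_fls (fps_at_square w_fps)"
  shows "g0 = fls_X ^ 2 * v / (v * (1 - fls_X ^ 2) - fls_X)"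
proof -
  define w where "w = fps_to_fls (fps_at_square w_fps)"
  have "fps_to_fls (fps_at_square ((good_fps - 1) * (w_fps * (1 - fps_X) - fps_X))) =
      fps_to_fls (fps_at_square (fps_X * w_fps))"
    by (simp only: good_fps_identity)
  then have "g0 * (w * (1 - fls_X ^ 2) - fls_X ^ 2) = fls_X ^ 2 * w"
    unfolding g0_eq w_def by (simp add: fps_at_square_simps fls_times_fps_to_fls fps_to_fls_power)
  then have "fls_X * (g0 * (v * (1 - fls_X ^ 2) - fls_X)) = fls_X * (fls_X ^ 2 * v)"
    using assms unfolding w_def[symmetric] by algebra
  then have eq: "g0 * (v * (1 - fls_X ^ 2) - fls_X) = fls_X ^ 2 * v"
    by simp
  have "fls_nth v (-1) = 1"
    using arg_cong[OF assms, of "\<lambda>f. fls_nth f 0"]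
    by (simp add: fls_X_times_conv_shift fps_at_square_w_fps(1))
  then have "v \<noteq> 0" by auto
  then have "v * (1 - fls_X ^ 2) - fls_X \<noteq> 0"
    using eq by auto
  with eq show ?thesis
    by (simp add: eq_divide_eq)
qed

theorem mainTheorem4:
  shows "(\<exists>!v. is_v1 v)
    \<and> (\<forall>v. is_v1 v \<longrightarrow> g0 = fls_X ^ 2 * v / (v * (1 - fls_X ^ 2) - fls_X))
    \<and> map dcount [1..<9] = [1, 2, 5, 13, 35, 97, 274, 785]"
proof -
  have is_v1_iff: "is_v1 v \<longleftrightarrow> fls_X * v = fps_to_fls (fps_at_square w_fps)" for v
    unfolding is_v1_iff_fps using fps_at_square_w_fps cubic_root_unique_fps by metis
  have "is_v1 (fls_X_inv * fps_to_fls (fps_at_square w_fps))"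
    unfolding is_v1_iff by (simp add: fls_X_times_conv_shift fls_X_inv_times_conv_shift)
  then have "\<exists>!v. is_v1 v"
    using is_v1_iff by (metis mult_cancel_left fls_X_nonzero)
  then show ?thesis
    using is_v1_iff g0_formula dcount_values by blast
qed

end
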